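(* Let $T_{\mu\nu}$ be a given stress-energy tensor on a four-dimensional spacetime, $\kappa=8\pi G/c^4$, $\Lambda\in\mathbb{R}$, and $f$ a differentiable real function. If a metric $g_{\mu\nu}$ is simultaneously a solution of Einstein's field equations $R_{\mu\nu}-\tfrac12 Rg_{\mu\nu}+\Lambda g_{\mu\nu}=\kappa T_{\mu\nu}$ and of the $f(R)$ field equations $f'(R)R_{\mu\nu}-\tfrac12 f(R)g_{\mu\nu}-\nabla_\mu\nabla_\nu f'(R)+\square f'(R)g_{\mu\nu}=\kappa T_{\mu\nu}$, and its Ricci scalar $R=g^{\mu\nu}R_{\mu\nu}$ equals a constant $k$, then $$k f'(k)-2f(k)+k-4\Lambda=0.$$
   Context: $R_{\mu\nu}$ is the Ricci tensor of $g_{\mu\nu}$, $\nabla$ its Levi-Civita connection and $\square=g^{\mu\nu}\nabla_\mu\nabla_\nu$. *)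

theory Defs
  imports "HOL-Analysis.Analysis"
begin

text \<open>Local-coordinate description of a 4-dimensional spacetime: a coordinate chart is an
open set U of real^4, the metric is a matrix-valued function, indices range over the type 4.\<close>

type_synonym pt = "real^4"
type_synonym idx = 4

definition pd :: "(pt \<Rightarrow> real) \<Rightarrow> idx \<Rightarrow> pt \<Rightarrow> real" where
  "pd F i x = frechet_derivative F (at x) (axis i 1)"

fun iter_pd :: "(pt \<Rightarrow> real) \<Rightarrow> idx list \<Rightarrow> pt \<Rightarrow> real" where
  "iter_pd F [] = F"
| "iter_pd F (i # is) = pd (iter_pd F is) i"

definition smooth_on :: "pt set \<Rightarrow> (pt \<Rightarrow> real) \<Rightarrow> bool" where
  "smooth_on U F \<longleftrightarrow> (\<forall>is. iter_pd F is differentiable_on U)"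

definition ginv :: "(pt \<Rightarrow> real^4^4) \<Rightarrow> pt \<Rightarrow> real^4^4" where
  "ginv g x = matrix_inv (g x)"

definition christoffel :: "(pt \<Rightarrow> real^4^4) \<Rightarrow> idx \<Rightarrow> idx \<Rightarrow> idx \<Rightarrow> pt \<Rightarrow> real" where
  "christoffel g a b c x = (1/2) * (\<Sum>d\<in>UNIV. ginv g x $ a $ d *
     (pd (\<lambda>y. g y $ d $ c) b x + pd (\<lambda>y. g y $ d $ b) c x - pd (\<lambda>y. g y $ b $ c) d x))"

definition ricci :: "(pt \<Rightarrow> real^4^4) \<Rightarrow> idx \<Rightarrow> idx \<Rightarrow> pt \<Rightarrow> real" where
  "ricci g b c x = (\<Sum>a\<in>UNIV. pd (christoffel g a b c) a x - pd (christoffel g a b a) c x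
     + (\<Sum>d\<in>UNIV. christoffel g a a d x * christoffel g d b c x
                 - christoffel g a c d x * christoffel g d b a x))"

definition ricci_scalar :: "(pt \<Rightarrow> real^4^4) \<Rightarrow> pt \<Rightarrow> real" where
  "ricci_scalar g x = (\<Sum>a\<in>UNIV. \<Sum>b\<in>UNIV. ginv g x $ a $ b * ricci g a b x)"

definition hess :: "(pt \<Rightarrow> real^4^4) \<Rightarrow> (pt \<Rightarrow> real) \<Rightarrow> idx \<Rightarrow> idx \<Rightarrow> pt \<Rightarrow> real" where
  "hess g \<phi> a b x = pd (pd \<phi> b) a x - (\<Sum>c\<in>UNIV. christoffel g c a b x * pd \<phi> c x)"

definition box :: "(pt \<Rightarrow> real^4^4) \<Rightarrow> (pt \<Rightarrow> real) \<Rightarrow> pt \<Rightarrow> real" where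
  "box g \<phi> x = (\<Sum>a\<in>UNIV. \<Sum>b\<in>UNIV. ginv g x $ a $ b * hess g \<phi> a b x)"

end

theory Submission
  imports Defs
begin

text \<open>Since the Ricci scalar is the constant k, the field f'(R) is constant as well, so its
covariant Hessian and d'Alembertian vanish and the f(R) equations reduce to
f'(k) R_mn - f(k)/2 g_mn = kappa T_mn. Subtracting Einstein's equations gives
(f'(k) - 1) R_mn = (f(k)/2 - k/2 + Lambda) g_mn, and contracting with g^mn, using
g^mn R_mn = k and g^mn g_mn = 4, yields (f'(k) - 1) k = 2 f(k) - 2 k + 4 Lambda.\<close>

lemma pd_eq_0_if_locally_constant:
  assumes "open U" "x \<in> U" "\<forall>y\<in>U. F y = C"
  shows "pd F i x = 0"
proof -
  have "(F has_derivative (\<lambda>_. 0)) (at x)"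
    by (rule has_derivative_transform_within_open[OF has_derivative_const assms(1,2)])
       (simp add: assms(3))
  hence "frechet_derivative F (at x) = (\<lambda>_. 0)"
    by (rule frechet_derivative_at[symmetric])
  thus ?thesis by (simp add: pd_def)
qed

lemma hess_eq_0_if_locally_constant:
  assumes "open U" "x \<in> U" "\<forall>y\<in>U. \<phi> y = C"
  shows "hess g \<phi> a b x = 0"
proof -
  have pd_0: "\<forall>y\<in>U. pd \<phi> i y = 0" for i
    using pd_eq_0_if_locally_constant[OF assms(1) _ assms(3)] by blast
  show ?thesis
    using pd_eq_0_if_locally_constant[OF assms(1,2) pd_0] pd_0 assms(2) by (simp add: hess_def)
qed

lemma box_eq_0_if_locally_constant:
  assumes "open U" "x \<in> U" "\<forall>y\<in>U. \<phi> y = C"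
  shows "box g \<phi> x = 0"
  by (simp add: box_def hess_eq_0_if_locally_constant[OF assms])

lemma matrix_inv_mult_eq_mat_1:
  fixes A :: "'a::semiring_1^'n^'n"
  assumes "invertible A"
  shows "matrix_inv A ** A = mat 1"
  using someI_ex[OF assms[unfolded invertible_def]] unfolding matrix_inv_def by blast

lemma contraction_matrix_inv_symmetric:
  fixes A :: "real^'n^'n"
  assumes "transpose A = A" "invertible A"
  shows "(\<Sum>a\<in>UNIV. \<Sum>b\<in>UNIV. matrix_inv A $ a $ b * A $ a $ b) = real CARD('n)"
proof -
  have "A $ b $ a = A $ a $ b" for a b
    using arg_cong[OF assms(1), of "\<lambda>M. M $ a $ b"] by (simp add: transpose_def)
  hence "(\<Sum>b\<in>UNIV. matrix_inv A $ a $ b * A $ a $ b) = (matrix_inv A ** A) $ a $ a" for a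
    by (simp add: matrix_matrix_mult_def)
  thus ?thesis
    by (simp add: matrix_inv_mult_eq_mat_1[OF assms(2)] mat_def)
qed

lemma contraction_proportional:
  fixes \<alpha> \<beta> :: "'a::comm_semiring_0"
  assumes "\<And>m n. \<alpha> * R m n = \<beta> * M m n"
  shows "\<alpha> * (\<Sum>m\<in>I. \<Sum>n\<in>J. A m n * R m n) = \<beta> * (\<Sum>m\<in>I. \<Sum>n\<in>J. A m n * M m n)"
proof -
  have "\<alpha> * (\<Sum>m\<in>I. \<Sum>n\<in>J. A m n * R m n) = (\<Sum>m\<in>I. \<Sum>n\<in>J. A m n * (\<alpha> * R m n))"
    by (simp only: sum_distrib_left mult.left_commute)
  also have "\<dots> = (\<Sum>m\<in>I. \<Sum>n\<in>J. A m n * (\<beta> * M m n))"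
    by (simp only: assms)
  also have "\<dots> = \<beta> * (\<Sum>m\<in>I. \<Sum>n\<in>J. A m n * M m n)"
    by (simp only: sum_distrib_left mult.left_commute)
  finally show ?thesis .
qed

theorem mainTheorem2:
  fixes g T :: "real^4 \<Rightarrow> real^4^4" and U :: "(real^4) set"
    and f :: "real \<Rightarrow> real" and \<Lambda> k G c :: real
  assumes U_open: "open U" and U_ne: "U \<noteq> {}"
    and g_sym: "\<forall>x\<in>U. transpose (g x) = g x"
    and g_inv: "\<forall>x\<in>U. invertible (g x)"
    and g_lorentz: "\<forall>x\<in>U. det (g x) < 0"
    and g_smooth: "\<forall>i j. smooth_on U (\<lambda>x. g x $ i $ j)"
    and T_sym: "\<forall>x\<in>U. transpose (T x) = T x"
    and G_pos: "G > 0" and c_pos: "c > 0"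
    and f_diff: "\<forall>r. f differentiable (at r)"
    and einstein: "\<forall>x\<in>U. \<forall>\<mu> \<nu>.
       ricci g \<mu> \<nu> x - 1/2 * ricci_scalar g x * g x $ \<mu> $ \<nu> + \<Lambda> * g x $ \<mu> $ \<nu>
         = (8 * pi * G / c ^ 4) * T x $ \<mu> $ \<nu>"
    and fR: "\<forall>x\<in>U. \<forall>\<mu> \<nu>.
       deriv f (ricci_scalar g x) * ricci g \<mu> \<nu> x
       - 1/2 * f (ricci_scalar g x) * g x $ \<mu> $ \<nu>
       - hess g (\<lambda>y. deriv f (ricci_scalar g y)) \<mu> \<nu> x
       + box g (\<lambda>y. deriv f (ricci_scalar g y)) x * g x $ \<mu> $ \<nu>
         = (8 * pi * G / c ^ 4) * T x $ \<mu> $ \<nu>"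
    and R_const: "\<forall>x\<in>U. ricci_scalar g x = k"
  shows "k * deriv f k - 2 * f k + k - 4 * \<Lambda> = 0"
proof -
  obtain x where x: "x \<in> U" using U_ne by blast
  have f'R_const: "\<forall>y\<in>U. deriv f (ricci_scalar g y) = deriv f k"
    using R_const by simp
  have "(deriv f k - 1) * ricci g m n x = (f k / 2 - k / 2 + \<Lambda>) * g x $ m $ n" for m n
    using fR[rule_format, OF x, of m n] einstein[rule_format, OF x, of m n] R_const x
      hess_eq_0_if_locally_constant[OF U_open x f'R_const]
      box_eq_0_if_locally_constant[OF U_open x f'R_const]
    by (simp add: algebra_simps)
  hence "(deriv f k - 1) * ricci_scalar g x = (f k / 2 - k / 2 + \<Lambda>) *
      (\<Sum>m\<in>UNIV. \<Sum>n\<in>UNIV. matrix_inv (g x) $ m $ n * g x $ m $ n)"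
    unfolding ricci_scalar_def ginv_def by (rule contraction_proportional)
  hence "(deriv f k - 1) * k = (f k / 2 - k / 2 + \<Lambda>) * 4"
    using contraction_matrix_inv_symmetric[of "g x"] g_sym g_inv R_const x by simp
  thus ?thesis by (simp add: algebra_simps)
qed

end
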